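(* Let $n\ge 1$ and let $\mathbf{s}=[s_1,\dots,s_n]^T\in\mathbb{R}^n$ have pairwise distinct entries. Let $A_{\mathbf{s}}\in\mathbb{R}^{n\times n}$ be given by $A_{\mathbf{s}}[i,j]=|s_i-s_j|$, and let $\mathbb{1}\in\mathbb{R}^n$ be the all-ones column vector. Then for every $i,j\in\{1,\dots,n\}$, $$P_{\mathrm{sort}(\mathbf{s})}[i,j]=\begin{cases}1 & \text{if } j=\arg\max\big[(n+1-2i)\mathbf{s}-A_{\mathbf{s}}\mathbb{1}\big],\\ 0 & \text{otherwise,}\end{cases}$$ where the $\arg\max$ is taken over the $n$ coordinates of the vector $(n+1-2i)\mathbf{s}-A_{\mathbf{s}}\mathbb{1}$ (whose $j$-th coordinate is $(n+1-2i)s_j-\sum_{k=1}^n|s_j-s_k|$), and this maximizer is unique.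
   Context: A permutation $\mathbf{z}=[z_1,\dots,z_n]^T$ of $\{1,\dots,n\}$ has permutation matrix $P_{\mathbf{z}}\in\{0,1\}^{n\times n}$ with $P_{\mathbf{z}}[i,j]=1$ iff $j=z_i$. For $\mathbf{s}\in\mathbb{R}^n$, $\mathrm{sort}(\mathbf{s})$ is the permutation listing the indices of $\mathbf{s}$ in order of decreasing value: $z_1$ is the index of the largest entry, $z_2$ the index of the second largest, and so on (e.g. $\mathrm{sort}([9,1,5,2]^T)=[1,3,4,2]^T$). *)

theory Defs
  imports Complex_Main
begin

text \<open>Vectors in R^n are functions nat => real indexed by {1..n};
  permutations of {1..n} are functions nat => nat (z i = z_i for i in {1..n}).\<close>

definition perm_matrix :: "(nat \<Rightarrow> nat) \<Rightarrow> nat \<Rightarrow> nat \<Rightarrow> real" where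
  "perm_matrix z i j = (if j = z i then 1 else 0)"

definition sort_perm :: "nat \<Rightarrow> (nat \<Rightarrow> real) \<Rightarrow> (nat \<Rightarrow> nat)" where
  "sort_perm n s = (THE z. bij_betw z {1..n} {1..n} \<and>
      (\<forall>i\<in>{1..n}. \<forall>j\<in>{1..n}. i < j \<longrightarrow> s (z j) < s (z i)) \<and>
      (\<forall>i. i \<notin> {1..n} \<longrightarrow> z i = 0))"

definition abs_diff_matrix :: "(nat \<Rightarrow> real) \<Rightarrow> nat \<Rightarrow> nat \<Rightarrow> real" where
  "abs_diff_matrix s i j = \<bar>s i - s j\<bar>"

definition score_vec :: "nat \<Rightarrow> (nat \<Rightarrow> real) \<Rightarrow> nat \<Rightarrow> nat \<Rightarrow> real" where
  "score_vec n s i j = (real n + 1 - 2 * real i) * s j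
      - (\<Sum>k = 1..n. abs_diff_matrix s j k * 1)"

end

theory Submission
  imports Defs
begin

text \<open>Let \<open>r\<close> be the number of entries of \<open>s\<close> exceeding \<open>t\<close>. Moving a point from
  \<open>t\<close> up by \<open>d > 0\<close> increases \<open>\<Sum>k |x - s k|\<close> by at least \<open>(n - 2r) d\<close>, and moving it down by
  \<open>d\<close> increases it by at least \<open>(2r + 2 - n) d\<close>. Hence with \<open>c = n - 1 - 2r\<close> the function
  \<open>c x - \<Sum>k |x - s k|\<close> is strictly smaller at every other entry of \<open>s\<close> than at \<open>t\<close>. If \<open>t\<close> is
  the \<open>i\<close>-th largest entry then \<open>r = i - 1\<close> and \<open>c = n + 1 - 2i\<close>, so the \<open>i\<close>-th score vector is
  uniquely maximized at the index \<open>sort(s)_i\<close>.\<close>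

lemma sum_abs_diff_increase:
  fixes v :: "'a \<Rightarrow> real"
  assumes "finite A" and "t < y"
  shows "(real (card {k\<in>A. v k \<le> t}) - real (card {k\<in>A. t < v k})) * (y - t)
           \<le> (\<Sum>k\<in>A. \<bar>y - v k\<bar>) - (\<Sum>k\<in>A. \<bar>t - v k\<bar>)"
proof -
  have "(\<Sum>k\<in>A. if v k \<le> t then y - t else - (y - t)) \<le> (\<Sum>k\<in>A. \<bar>y - v k\<bar> - \<bar>t - v k\<bar>)"
    using \<open>t < y\<close> by (intro sum_mono) (auto simp: abs_if)
  moreover have "{k\<in>A. \<not> v k \<le> t} = {k\<in>A. t < v k}"
    by auto
  ultimately show ?thesis
    using \<open>finite A\<close> by (simp add: sum.If_cases sum_subtractf Int_def algebra_simps)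
qed

definition rank :: "'a set \<Rightarrow> ('a \<Rightarrow> 'b::linorder) \<Rightarrow> 'a \<Rightarrow> nat" where
  "rank A s x = card {y\<in>A. s x < s y} + 1"

lemma rank_less_iff:
  assumes "finite A" and "inj_on s A" and "x \<in> A" and "y \<in> A"
  shows "rank A s x < rank A s y \<longleftrightarrow> s y < s x"
proof
  assume "s y < s x"
  then have "{z\<in>A. s x < s z} \<subset> {z\<in>A. s y < s z}"
    using \<open>x \<in> A\<close> by auto
  then show "rank A s x < rank A s y"
    unfolding rank_def using \<open>finite A\<close> by (simp add: psubset_card_mono)
next
  assume less: "rank A s x < rank A s y"
  show "s y < s x"
  proof (rule ccontr)
    assume "\<not> s y < s x"
    then have "{z\<in>A. s y < s z} \<subseteq> {z\<in>A. s x < s z}"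
      by auto
    then show False
      using less \<open>finite A\<close> unfolding rank_def by (simp add: card_mono leD)
  qed
qed

lemma inj_on_rank:
  assumes "finite A" and "inj_on s A"
  shows "inj_on (rank A s) A"
proof (rule inj_onI)
  fix x y assume "x \<in> A" "y \<in> A" "rank A s x = rank A s y"
  then have "s x = s y"
    using rank_less_iff[OF assms] by (metis less_irrefl linorder_cases)
  with \<open>inj_on s A\<close> \<open>x \<in> A\<close> \<open>y \<in> A\<close> show "x = y"
    by (simp add: inj_on_eq_iff)
qed

lemma bij_betw_rank:
  assumes "finite A" and "inj_on s A"
  shows "bij_betw (rank A s) A {1..card A}"
proof -
  have "rank A s x \<in> {1..card A}" if "x \<in> A" for x
  proof -
    have "{y\<in>A. s x < s y} \<subseteq> A - {x}"
      by auto
    then have "card {y\<in>A. s x < s y} \<le> card A - 1"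
      using \<open>finite A\<close> that card_mono[of "A - {x}"] by simp
    moreover have "card A \<ge> 1"
      using \<open>finite A\<close> that by (simp add: Suc_le_eq card_gt_0_iff) blast
    ultimately show ?thesis
      unfolding rank_def by simp
  qed
  then have "rank A s ` A \<subseteq> {1..card A}"
    by blast
  moreover have "card (rank A s ` A) = card {1..card A}"
    by (simp add: card_image inj_on_rank[OF assms])
  ultimately show ?thesis
    using inj_on_rank[OF assms] by (simp add: bij_betw_def card_subset_eq)
qed

lemma rank_sorting_perm:
  assumes z: "bij_betw z {1..n} {1..n}"
    and decr: "\<forall>i\<in>{1..n}. \<forall>j\<in>{1..n}. i < j \<longrightarrow> s (z j) < s (z i)"
    and "i \<in> {1..n}"
  shows "rank {1..n} s (z i) = i"
proof -
  have "s (z i) < s (z j) \<longleftrightarrow> j < i" if "j \<in> {1..n}" for j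
    using decr that \<open>i \<in> {1..n}\<close> by (metis less_asym less_irrefl linorder_neqE_nat)
  then have "{j\<in>{1..n}. s (z i) < s (z j)} = {1..<i}"
    using \<open>i \<in> {1..n}\<close> by auto
  moreover have "{k\<in>{1..n}. s (z i) < s k} = {k\<in>z ` {1..n}. s (z i) < s k}"
    using bij_betw_imp_surj_on[OF z] by simp
  ultimately have "{k\<in>{1..n}. s (z i) < s k} = z ` {1..<i}"
    by (simp only: Compr_image_eq)
  moreover have "inj_on z {1..<i}"
    using z \<open>i \<in> {1..n}\<close> unfolding bij_betw_def by (auto elim: inj_on_subset)
  ultimately show ?thesis
    unfolding rank_def using \<open>i \<in> {1..n}\<close> by (simp add: card_image)
qed

lemma sort_perm_rank:
  assumes inj: "inj_on s {1..n}" and "i \<in> {1..n}"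
  shows "sort_perm n s i \<in> {1..n}" and "rank {1..n} s (sort_perm n s i) = i"
proof -
  let ?R = "rank {1..n} s"
  define sorting where "sorting z \<longleftrightarrow> bij_betw z {1..n} {1..n} \<and>
      (\<forall>i\<in>{1..n}. \<forall>j\<in>{1..n}. i < j \<longrightarrow> s (z j) < s (z i)) \<and>
      (\<forall>i. i \<notin> {1..n} \<longrightarrow> z i = 0)" for z
  define z0 where "z0 i = (if i \<in> {1..n} then the_inv_into {1..n} ?R i else 0)" for i
  have bij: "bij_betw ?R {1..n} {1..n}"
    using bij_betw_rank[OF _ inj] by simp
  have z0: "z0 j \<in> {1..n}" "?R (z0 j) = j" if "j \<in> {1..n}" for j
    using that bij the_inv_into_into[of ?R "{1..n}" j "{1..n}"] f_the_inv_into_f_bij_betw[OF bij]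
    unfolding z0_def bij_betw_def by auto
  have "sorting z0"
    unfolding sorting_def
  proof (intro conjI ballI impI allI)
    show "bij_betw z0 {1..n} {1..n}"
      using bij_betw_the_inv_into[OF bij] by (rule bij_betw_cong[THEN iffD1, rotated]) (simp add: z0_def)
    show "s (z0 j) < s (z0 i)" if "i \<in> {1..n}" "j \<in> {1..n}" "i < j" for i j
      using that z0 rank_less_iff[OF _ inj, of "z0 i" "z0 j"] by simp
  qed (auto simp: z0_def)
  moreover have "z = z0" if "sorting z" for z
  proof
    fix j show "z j = z0 j"
    proof (cases "j \<in> {1..n}")
      case True
      then have "z j \<in> {1..n}" "?R (z j) = j"
        using that rank_sorting_perm[of z n s j] unfolding sorting_def bij_betw_def by auto
      then show ?thesis
        using z0[OF True] bij unfolding bij_betw_def by (metis inj_on_eq_iff)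
    next
      case False
      then show ?thesis
        using that unfolding sorting_def z0_def by auto
    qed
  qed
  ultimately have "sort_perm n s = z0"
    unfolding sort_perm_def sorting_def[symmetric] by (rule the_equality)
  then show "sort_perm n s i \<in> {1..n}" and "?R (sort_perm n s i) = i"
    using z0 \<open>i \<in> {1..n}\<close> by simp_all
qed

lemma rank_score_strict_max:
  fixes v :: "'a \<Rightarrow> real"
  assumes "finite A" and "inj_on v A" and "a \<in> A" and "b \<in> A" and "b \<noteq> a"
  defines "c \<equiv> real (card A) + 1 - 2 * real (rank A v a)"
  shows "c * v b - (\<Sum>k\<in>A. \<bar>v b - v k\<bar>) < c * v a - (\<Sum>k\<in>A. \<bar>v a - v k\<bar>)"
proof -
  let ?r = "card {k\<in>A. v a < v k}"
  have card_filter_compl: "card {k\<in>A. \<not> P k} = card A - card {k\<in>A. P k}" for P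
  proof -
    have "{k\<in>A. \<not> P k} = A - {k\<in>A. P k}"
      by auto
    then show ?thesis
      using \<open>finite A\<close> by (simp add: card_Diff_subset)
  qed
  have "v b \<noteq> v a"
    using assms by (simp add: inj_on_eq_iff)
  then consider "v a < v b" | "v b < v a"
    by linarith
  then show ?thesis
  proof cases
    case 1
    have "card {k\<in>A. v k \<le> v a} = card A - ?r"
      using card_filter_compl[of "\<lambda>k. v a < v k"] by (simp add: not_less)
    moreover have "?r \<le> card A"
      using \<open>finite A\<close> by (simp add: card_mono)
    ultimately have "(real (card A) - 2 * real ?r) * (v b - v a)
                 \<le> (\<Sum>k\<in>A. \<bar>v b - v k\<bar>) - (\<Sum>k\<in>A. \<bar>v a - v k\<bar>)"
      using sum_abs_diff_increase[OF \<open>finite A\<close> 1, of v] by (simp add: of_nat_diff)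
    then show ?thesis
      using 1 unfolding c_def rank_def by (simp add: algebra_simps)
  next
    case 2
    have "{k\<in>A. v a \<le> v k} = insert a {k\<in>A. v a < v k}"
      using \<open>a \<in> A\<close> \<open>inj_on v A\<close> unfolding inj_on_def by (auto simp: le_less)
    then have above: "card {k\<in>A. v a \<le> v k} = ?r + 1"
      using \<open>finite A\<close> by simp
    have "card {k\<in>A. v k < v a} = card A - (?r + 1)"
      using card_filter_compl[of "\<lambda>k. v a \<le> v k"] above by (simp add: not_le)
    moreover have "?r + 1 \<le> card A"
      using above \<open>finite A\<close> by (metis (no_types, lifting) card_mono mem_Collect_eq subsetI)
    moreover have "(real (card {k\<in>A. v a \<le> v k}) - real (card {k\<in>A. v k < v a})) * (v a - v b)
                   \<le> (\<Sum>k\<in>A. \<bar>v b - v k\<bar>) - (\<Sum>k\<in>A. \<bar>v a - v k\<bar>)"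
      using sum_abs_diff_increase[OF \<open>finite A\<close>, of "- v a" "- v b" "\<lambda>k. - v k"] 2
      by (simp add: abs_minus_commute)
    ultimately have "(2 * real ?r + 2 - real (card A)) * (v a - v b)
                       \<le> (\<Sum>k\<in>A. \<bar>v b - v k\<bar>) - (\<Sum>k\<in>A. \<bar>v a - v k\<bar>)"
      using above by (simp add: of_nat_diff algebra_simps)
    then show ?thesis
      using 2 unfolding c_def rank_def by (simp add: algebra_simps)
  qed
qed

lemma arg_max_on_eqI:
  fixes f :: "'a \<Rightarrow> 'b::order"
  assumes "a \<in> S" and strict: "\<And>x. x \<in> S \<Longrightarrow> x \<noteq> a \<Longrightarrow> f x < f a"
  shows "arg_max_on f S = a"
  unfolding arg_max_on_def
proof (rule arg_maxI[where Q = "\<lambda>x. x = a"])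
  show "a \<in> S"
    by (rule \<open>a \<in> S\<close>)
  show "\<not> f a < f y" if "y \<in> S" for y
    using strict[OF that] by (cases "y = a") auto
  show "x = a" if "x \<in> S" and "\<forall>y. y \<in> S \<longrightarrow> \<not> f x < f y" for x
    using that \<open>a \<in> S\<close> strict by blast
qed

theorem corollary1:
  fixes n :: nat and s :: "nat \<Rightarrow> real"
  assumes "n \<ge> 1"
    and "inj_on s {1..n}"
  shows "\<forall>i\<in>{1..n}.
           (\<exists>!j. j \<in> {1..n} \<and> (\<forall>k\<in>{1..n}. score_vec n s i k \<le> score_vec n s i j)) \<and>
           (\<forall>j\<in>{1..n}. perm_matrix (sort_perm n s) i j =
              (if j = arg_max_on (score_vec n s i) {1..n} then 1 else 0))"
proof
  fix i assume "i \<in> {1..n}"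
  define a where "a = sort_perm n s i"
  have a: "a \<in> {1..n}" "rank {1..n} s a = i"
    using sort_perm_rank[OF assms(2) \<open>i \<in> {1..n}\<close>] unfolding a_def by simp_all
  have strict: "score_vec n s i j < score_vec n s i a" if "j \<in> {1..n}" "j \<noteq> a" for j
    using rank_score_strict_max[OF _ assms(2) a(1) that] a(2)
    unfolding score_vec_def abs_diff_matrix_def by simp
  have "score_vec n s i k \<le> score_vec n s i a" if "k \<in> {1..n}" for k
    using strict[OF that] by (cases "k = a") auto
  then have "\<exists>!j. j \<in> {1..n} \<and> (\<forall>k\<in>{1..n}. score_vec n s i k \<le> score_vec n s i j)"
    using a(1) strict by (intro ex1I[of _ a]) (blast, meson not_le)
  moreover have "arg_max_on (score_vec n s i) {1..n} = a"
    using a(1) strict by (rule arg_max_on_eqI)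
  ultimately show "(\<exists>!j. j \<in> {1..n} \<and> (\<forall>k\<in>{1..n}. score_vec n s i k \<le> score_vec n s i j)) \<and>
           (\<forall>j\<in>{1..n}. perm_matrix (sort_perm n s) i j =
              (if j = arg_max_on (score_vec n s i) {1..n} then 1 else 0))"
    unfolding perm_matrix_def a_def by simp
qed

end
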